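(* Let $L$ be a finite lattice and $\varphi\in M_1(L)$. For $g\in R(\mathcal L)$ define $$B_\varphi(g)=\min\{\Phi(g):\Phi\in M_\infty(\mathcal L),\ \Pi(\Phi)=\varphi\},\qquad S^\varphi(g)=\max\Big\{\sum_{x\in L}r_x\varphi(x): (r_x)_{x\in L}\in\mathbb R^L,\ \sum_{x\in V}r_x\le g(V)\ \text{for all } V\in\mathcal L\Big\}.$$ Then $B_\varphi(g)=S^\varphi(g)$ for every $g\in R(\mathcal L)$.
   Context: $L$ is a finite lattice. $\mathcal L$ is the set of nonempty up-sets of $L$ (subsets $U$ with $x\in U,\ x\le y\Rightarrow y\in U$), ordered by $U\preceq V$ iff $U\supseteq V$; it is a distributive lattice with meet given by union. $R(\mathcal L)$ denotes real-valued functions on $\mathcal L$. $M_1(L)$ is the set of nonnegative monotone functions on $L$; $M_\infty(\mathcal L)$ is the set of nonnegative completely monotone functions on $(\mathcal L,\preceq)$, where completeness monotonicity means all successive differences $\nabla_{U_1,\dots,U_n}\Phi\ge0$, with $\nabla_U\Phi(W)=\Phi(W)-\Phi(W\wedge U)$ iterated. For $a\in L$, $\langle a\rangle^*=\{x: x\ge a\}$, and $\Pi(\Phi)(x)=\Phi(\langle a\rangle^* )|_{a=x}$, i.e. $\Pi(\Phi)(x)=\Phi(\langle x\rangle^* )$. For $\Phi\in M_\infty(\mathcal L)$ with Möbius inverse $F$ (the unique $F$ with $\Phi(U)=\sum_{V\preceq U}F(V)$, which is nonnegative), $\Phi(g)=\sum_{V\in\mathcal L}F(V)g(V)$. *)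

theory Defs
  imports Complex_Main
begin

text \<open>The set of nonempty up-sets of the finite lattice (the carrier of the
 lattice \<open>\<L>\<close>; its order \<open>U \<preceq> V\<close> is \<open>U \<supseteq> V\<close> and its meet is union).\<close>
definition upsets :: "('a::{finite,lattice}) set set" where
  "upsets = {U. U \<noteq> {} \<and> (\<forall>x y. x \<in> U \<and> x \<le> y \<longrightarrow> y \<in> U)}"

definition principal_up :: "'a::{finite,lattice} \<Rightarrow> 'a set" where
  "principal_up a = {x. a \<le> x}"

definition M1 :: "('a::{finite,lattice} \<Rightarrow> real) set" where
  "M1 = {\<phi>. (\<forall>x. 0 \<le> \<phi> x) \<and> (\<forall>x y. x \<le> y \<longrightarrow> \<phi> x \<le> \<phi> y)}"

text \<open>Difference operator \<open>\<nabla>_U \<Phi>(W) = \<Phi>(W) - \<Phi>(W \<and> U)\<close>, meet in \<open>\<L>\<close> being union.\<close>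
definition nabla :: "'a set \<Rightarrow> ('a set \<Rightarrow> real) \<Rightarrow> 'a set \<Rightarrow> real" where
  "nabla U \<Phi> W = \<Phi> W - \<Phi> (W \<union> U)"

definition nabla_iter :: "'a set list \<Rightarrow> ('a set \<Rightarrow> real) \<Rightarrow> 'a set \<Rightarrow> real" where
  "nabla_iter Us \<Phi> = foldr nabla Us \<Phi>"

text \<open>\<open>M_\<infinity>(\<L>)\<close>: nonnegative completely monotone functions on \<open>\<L>\<close>
 (values outside \<open>\<L>\<close> are irrelevant).\<close>
definition Minf :: "('a::{finite,lattice} set \<Rightarrow> real) set" where
  "Minf = {\<Phi>. (\<forall>W\<in>upsets. 0 \<le> \<Phi> W) \<and>
     (\<forall>Us W. set Us \<subseteq> upsets \<longrightarrow> Us \<noteq> [] \<longrightarrow> W \<in> upsets \<longrightarrow> 0 \<le> nabla_iter Us \<Phi> W)}"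

definition Pi_proj :: "('a::{finite,lattice} set \<Rightarrow> real) \<Rightarrow> 'a \<Rightarrow> real" where
  "Pi_proj \<Phi> x = \<Phi> (principal_up x)"

definition moebius :: "('a::{finite,lattice} set \<Rightarrow> real) \<Rightarrow> 'a set \<Rightarrow> real" where
  "moebius \<Phi> = (THE F. (\<forall>U\<in>upsets. \<Phi> U = (\<Sum>V\<in>{V\<in>upsets. U \<subseteq> V}. F V))
                        \<and> (\<forall>U. U \<notin> upsets \<longrightarrow> F U = 0))"

definition Phi_apply :: "('a::{finite,lattice} set \<Rightarrow> real) \<Rightarrow> ('a set \<Rightarrow> real) \<Rightarrow> real" where
  "Phi_apply \<Phi> g = (\<Sum>V\<in>upsets. moebius \<Phi> V * g V)"

definition B_values :: "('a::{finite,lattice} \<Rightarrow> real) \<Rightarrow> ('a set \<Rightarrow> real) \<Rightarrow> real set" where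
  "B_values \<phi> g = {Phi_apply \<Phi> g | \<Phi>. \<Phi> \<in> Minf \<and> Pi_proj \<Phi> = \<phi>}"

definition S_values :: "('a::{finite,lattice} \<Rightarrow> real) \<Rightarrow> ('a set \<Rightarrow> real) \<Rightarrow> real set" where
  "S_values \<phi> g = {(\<Sum>x\<in>UNIV. r x * \<phi> x) | r. \<forall>V\<in>upsets. (\<Sum>x\<in>V. r x) \<le> g V}"

end

theory Submission
  imports Defs "HOL-Analysis.Analysis"
begin

text \<open>A nonnegative completely monotone \<open>\<Phi>\<close> on \<open>\<L>\<close> is the same thing as the cumulative
function \<open>U \<mapsto> \<Sum>\<^bsub>V \<supseteq> U\<^esub> F(V)\<close> of a nonnegative weight \<open>F\<close> on \<open>\<L>\<close> (its Moebius inverse), since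
the iterated differences of \<open>\<Phi>\<close> are partial sums of \<open>F\<close>. The constraint \<open>\<Pi>(\<Phi>) = \<phi>\<close> says
\<open>\<Sum>\<^bsub>V \<ni> x\<^esub> F(V) = \<phi>(x)\<close>, i.e. \<open>\<phi> = \<Sum>\<^sub>V F(V) 1\<^sub>V\<close>. Hence \<open>B\<^sub>\<phi>(g)\<close> is the value of the linear program
of minimising \<open>\<Sum>\<^sub>V F(V) g(V)\<close> over such decompositions of \<open>\<phi>\<close>, and \<open>S\<^sup>\<phi>(g)\<close> is the value of
its dual. A monotone \<open>\<phi> \<ge> 0\<close> has a decomposition (peel off its level sets), the attainable
costs form a section of a finitely generated and hence closed cone, so the minimum is
attained, and Farkas' lemma gives a dual solution of the same value.\<close>

section \<open>Finitely generated cones\<close>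

lemma convex_cone_nonneg_combinations:
  "convex_cone {\<Sum>i\<in>I. l i *\<^sub>R v i | l. \<forall>i\<in>I. 0 \<le> (l i :: real)}"
  (is "convex_cone ?C")
  unfolding convex_cone_iff
proof (intro conjI ballI allI impI)
  show "0 \<in> ?C" by (intro CollectI exI[of _ "\<lambda>_. 0"]) simp
next
  fix x y assume "x \<in> ?C" "y \<in> ?C"
  then obtain l1 l2 where "x = (\<Sum>i\<in>I. l1 i *\<^sub>R v i)" "\<forall>i\<in>I. 0 \<le> l1 i"
      and "y = (\<Sum>i\<in>I. l2 i *\<^sub>R v i)" "\<forall>i\<in>I. 0 \<le> l2 i" by auto
  then have "x + y = (\<Sum>i\<in>I. (l1 i + l2 i) *\<^sub>R v i) \<and> (\<forall>i\<in>I. 0 \<le> l1 i + l2 i)"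
    by (simp add: scaleR_add_left sum.distrib)
  then show "x + y \<in> ?C" unfolding mem_Collect_eq by (rule exI[of _ "\<lambda>i. l1 i + l2 i"])
next
  fix x and c :: real assume "x \<in> ?C" "0 \<le> c"
  then obtain l where "x = (\<Sum>i\<in>I. l i *\<^sub>R v i)" "\<forall>i\<in>I. 0 \<le> l i" by auto
  then have "c *\<^sub>R x = (\<Sum>i\<in>I. (c * l i) *\<^sub>R v i) \<and> (\<forall>i\<in>I. 0 \<le> c * l i)"
    using \<open>0 \<le> c\<close> by (simp add: scaleR_sum_right)
  then show "c *\<^sub>R x \<in> ?C" unfolding mem_Collect_eq by (rule exI[of _ "\<lambda>i. c * l i"])
qed

lemma nonneg_combination_in_convex_cone_hull:
  assumes "\<forall>i\<in>I. 0 \<le> l i"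
  shows "(\<Sum>i\<in>I. l i *\<^sub>R v i) \<in> convex_cone hull (v ` I)"
proof -
  have "J \<subseteq> I \<Longrightarrow> (\<Sum>i\<in>J. l i *\<^sub>R v i) \<in> convex_cone hull (v ` I)" for J
  proof (induction J rule: infinite_finite_induct)
    case (insert i J)
    then have "l i *\<^sub>R v i \<in> convex_cone hull (v ` I)"
      using assms by (intro convex_cone_hull_mul hull_inc) auto
    then show ?case using insert by (simp add: convex_cone_hull_add)
  qed (simp_all add: convex_cone_hull_contains_0)
  then show ?thesis by simp
qed

lemma convex_cone_hull_finite_image:
  assumes "finite I"
  shows "convex_cone hull (v ` I) = {\<Sum>i\<in>I. l i *\<^sub>R v i | l. \<forall>i\<in>I. 0 \<le> l i}"
    (is "_ = ?C")
proof
  have "v j \<in> ?C" if "j \<in> I" for j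
  proof -
    have "(\<Sum>i\<in>I. (if i = j then 1 else 0) *\<^sub>R v i) = (\<Sum>i\<in>I. if i = j then v i else 0)"
      by (rule sum.cong) auto
    then have "v j = (\<Sum>i\<in>I. (if i = j then 1 else 0) *\<^sub>R v i)"
      using that assms by simp
    then show ?thesis by (intro CollectI exI[of _ "\<lambda>i. if i = j then 1 else 0"]) simp
  qed
  then show "convex_cone hull (v ` I) \<subseteq> ?C"
    by (intro hull_minimal convex_cone_nonneg_combinations) auto
  show "?C \<subseteq> convex_cone hull (v ` I)"
    using nonneg_combination_in_convex_cone_hull by blast
qed

lemma convex_cone_hull_insert:
  "convex_cone hull (insert a S) = {\<mu> *\<^sub>R a + y | \<mu> y. 0 \<le> \<mu> \<and> y \<in> convex_cone hull S}"
proof -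
  have "convex_cone hull {a} = {\<mu> *\<^sub>R a | \<mu>. 0 \<le> \<mu>}"
    by (auto simp: convex_cone_hull_convex_hull)
  then show ?thesis
    using convex_cone_hull_Un[of "{a}" S] by auto
qed

lemma farkas_convex_cone_hull:
  fixes b :: "'a::euclidean_space"
  assumes "finite S" "b \<notin> convex_cone hull S"
  obtains w where "\<forall>v\<in>S. 0 \<le> inner w v" "inner w b < 0"
proof -
  obtain a \<beta> where sep: "inner a b < \<beta>" "\<forall>k\<in>convex_cone hull S. \<beta> < inner a k"
    using separating_hyperplane_closed_point[OF convex_convex_cone_hull
        closed_convex_cone_hull[OF assms(1)] assms(2)] by blast
  have \<beta>: "\<beta> < 0" using sep(2) convex_cone_hull_contains_0 by fastforce
  have "0 \<le> inner a v" if v: "v \<in> S" for v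
  proof (rule ccontr)
    assume "\<not> 0 \<le> inner a v"
    then have "(\<beta> / inner a v) *\<^sub>R v \<in> convex_cone hull S"
      using v \<beta> by (intro convex_cone_hull_mul hull_inc) (auto simp: divide_nonpos_neg)
    moreover have "inner a ((\<beta> / inner a v) *\<^sub>R v) = \<beta>"
      using \<open>\<not> 0 \<le> inner a v\<close> by simp
    ultimately show False using sep(2) by fastforce
  qed
  then show thesis using sep(1) \<beta> by (intro that[of a]) auto
qed

section \<open>Moebius inversion on up-sets\<close>

lemma upsets_nonempty: "U \<in> upsets \<Longrightarrow> U \<noteq> {}"
  by (simp add: upsets_def)

lemma upsets_Un: "U \<in> upsets \<Longrightarrow> W \<in> upsets \<Longrightarrow> U \<union> W \<in> upsets"
  by (auto simp: upsets_def)

lemma principal_up_in_upsets: "principal_up a \<in> upsets"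
  by (auto simp: upsets_def principal_up_def intro: order_trans)

lemma principal_up_subset_iff: "V \<in> upsets \<Longrightarrow> principal_up a \<subseteq> V \<longleftrightarrow> a \<in> V"
  by (auto simp: principal_up_def upsets_def)

definition is_moebius :: "('a::{finite,lattice} set \<Rightarrow> real) \<Rightarrow> ('a set \<Rightarrow> real) \<Rightarrow> bool" where
  "is_moebius \<Phi> F \<longleftrightarrow> (\<forall>U\<in>upsets. \<Phi> U = (\<Sum>V\<in>{V\<in>upsets. U \<subseteq> V}. F V))
                        \<and> (\<forall>U. U \<notin> upsets \<longrightarrow> F U = 0)"

function moebius_rec :: "('a::{finite,lattice} set \<Rightarrow> real) \<Rightarrow> 'a set \<Rightarrow> real" where
  "moebius_rec \<Phi> U =
     (if U \<in> upsets then \<Phi> U - (\<Sum>V\<in>{V\<in>upsets. U \<subset> V}. moebius_rec \<Phi> V) else 0)"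
  by auto
termination
  by (relation "Wellfounded.measure (\<lambda>(_, U). card (UNIV - U))") (auto intro!: psubset_card_mono)

declare moebius_rec.simps [simp del]

lemma upsets_supersets_eq_insert:
  "U \<in> upsets \<Longrightarrow> {V\<in>upsets. U \<subseteq> V} = insert U {V\<in>upsets. U \<subset> V}"
  by auto

lemma is_moebius_moebius_rec: "is_moebius \<Phi> (moebius_rec \<Phi>)"
  unfolding is_moebius_def
proof (intro conjI ballI allI impI)
  fix U :: "'a set" assume "U \<in> upsets"
  then show "\<Phi> U = (\<Sum>V\<in>{V\<in>upsets. U \<subseteq> V}. moebius_rec \<Phi> V)"
    by (simp add: upsets_supersets_eq_insert moebius_rec.simps[of \<Phi> U])
qed (simp add: moebius_rec.simps)

lemma is_moebius_unique:
  assumes F: "is_moebius \<Phi> F" and G: "is_moebius \<Phi> G"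
  shows "F = G"
proof
  fix U :: "'a set"
  show "F U = G U"
  proof (induction "card (UNIV - U)" arbitrary: U rule: less_induct)
    case less
    show ?case
    proof (cases "U \<in> upsets")
      case False
      then show ?thesis using F G by (simp add: is_moebius_def)
    next
      case True
      have "(\<Sum>V\<in>{V\<in>upsets. U \<subset> V}. F V) = (\<Sum>V\<in>{V\<in>upsets. U \<subset> V}. G V)"
        by (intro sum.cong refl less) (auto intro!: psubset_card_mono)
      moreover have "(\<Sum>V\<in>{V\<in>upsets. U \<subseteq> V}. F V) = (\<Sum>V\<in>{V\<in>upsets. U \<subseteq> V}. G V)"
        using F G True by (simp add: is_moebius_def)
      ultimately show ?thesis
        using True by (simp add: upsets_supersets_eq_insert)
    qed
  qed
qed

(* Defs.moebius is qualified because HOL-Analysis also has a constant moebius. *)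
lemma moebius_eqI: "is_moebius \<Phi> F \<Longrightarrow> Defs.moebius \<Phi> = F"
  unfolding Defs.moebius_def is_moebius_def[symmetric]
  using is_moebius_unique by (intro the_equality) blast+

lemma is_moebius_moebius: "is_moebius \<Phi> (Defs.moebius \<Phi>)"
  using is_moebius_moebius_rec moebius_eqI by metis

lemma nabla_iter_moebius:
  assumes "is_moebius \<Phi> F" "set Us \<subseteq> upsets" "W \<in> upsets"
  shows "nabla_iter Us \<Phi> W = (\<Sum>V\<in>{V\<in>upsets. W \<subseteq> V \<and> (\<forall>U\<in>set Us. \<not> U \<subseteq> V)}. F V)"
  using assms(2,3)
proof (induction Us arbitrary: W)
  case Nil
  then show ?case using assms(1) by (simp add: nabla_iter_def is_moebius_def)
next
  case (Cons U Us)
  let ?P = "\<lambda>V. \<forall>U\<in>set Us. \<not> U \<subseteq> V"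
  have Us: "set Us \<subseteq> upsets" and WU: "W \<union> U \<in> upsets"
    using Cons.prems upsets_Un by auto
  have "nabla_iter (U # Us) \<Phi> W = nabla_iter Us \<Phi> W - nabla_iter Us \<Phi> (W \<union> U)"
    by (simp add: nabla_iter_def nabla_def)
  also have "\<dots> = (\<Sum>V\<in>{V\<in>upsets. W \<subseteq> V \<and> ?P V}. F V)
                 - (\<Sum>V\<in>{V\<in>upsets. W \<union> U \<subseteq> V \<and> ?P V}. F V)"
    using Cons.IH[OF Us Cons.prems(2)] Cons.IH[OF Us WU] by simp
  also have "(\<Sum>V\<in>{V\<in>upsets. W \<subseteq> V \<and> ?P V}. F V) =
     (\<Sum>V\<in>{V\<in>upsets. W \<subseteq> V \<and> ?P V \<and> \<not> U \<subseteq> V}. F V)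
       + (\<Sum>V\<in>{V\<in>upsets. W \<union> U \<subseteq> V \<and> ?P V}. F V)"
    by (subst sum.union_disjoint[symmetric]) (auto intro!: sum.cong)
  finally show ?case by (simp add: conj_commute conj_left_commute)
qed

lemma moebius_nonneg:
  assumes "\<Phi> \<in> Minf" "V \<in> upsets"
  shows "0 \<le> Defs.moebius \<Phi> V"
proof -
  obtain xs where xs: "set xs = - V" using finite_list[of "- V"] by auto
  define Us where "Us = map principal_up xs"
  have Us: "set Us \<subseteq> upsets" by (auto simp: Us_def principal_up_in_upsets)
  \<comment> \<open>differencing along the principal up-sets of all points outside \<open>V\<close> isolates the term \<open>F(V)\<close>\<close>
  have "(\<forall>U\<in>set Us. \<not> U \<subseteq> V') \<longleftrightarrow> V' \<subseteq> V" if "V' \<in> upsets" for V'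
    using principal_up_subset_iff[OF that] by (auto simp: Us_def xs)
  then have "{V'\<in>upsets. V \<subseteq> V' \<and> (\<forall>U\<in>set Us. \<not> U \<subseteq> V')} = {V}"
    using assms(2) by blast
  then have "Defs.moebius \<Phi> V = nabla_iter Us \<Phi> V"
    using nabla_iter_moebius[OF is_moebius_moebius Us assms(2)] by simp
  moreover have "0 \<le> nabla_iter Us \<Phi> V"
  proof (cases "Us = []")
    case True
    have "0 \<le> \<Phi> V" using assms unfolding Minf_def by blast
    then show ?thesis using True by (simp add: nabla_iter_def)
  next
    case False
    then show ?thesis using assms Us unfolding Minf_def by blast
  qed
  ultimately show ?thesis by simp
qed

lemma Pi_proj_eq_sum_moebius:
  assumes "is_moebius \<Phi> F"
  shows "Pi_proj \<Phi> x = (\<Sum>V\<in>{V\<in>upsets. x \<in> V}. F V)"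
proof -
  have "Pi_proj \<Phi> x = (\<Sum>V\<in>{V\<in>upsets. principal_up x \<subseteq> V}. F V)"
    using assms principal_up_in_upsets unfolding is_moebius_def Pi_proj_def by blast
  also have "{V\<in>upsets. principal_up x \<subseteq> V} = {V\<in>upsets. x \<in> V}"
    using principal_up_subset_iff by blast
  finally show ?thesis .
qed

definition cumulative :: "('a::{finite,lattice} set \<Rightarrow> real) \<Rightarrow> 'a set \<Rightarrow> real" where
  "cumulative F U = (\<Sum>V\<in>{V\<in>upsets. U \<subseteq> V}. F V)"

lemma is_moebius_cumulative: "\<forall>V. V \<notin> upsets \<longrightarrow> F V = 0 \<Longrightarrow> is_moebius (cumulative F) F"
  by (simp add: is_moebius_def cumulative_def)

lemma cumulative_in_Minf:
  assumes "\<forall>V. V \<notin> upsets \<longrightarrow> F V = 0" "\<forall>V\<in>upsets. 0 \<le> F V"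
  shows "cumulative F \<in> Minf"
  using assms nabla_iter_moebius[OF is_moebius_cumulative[OF assms(1)]]
  by (auto simp: Minf_def cumulative_def intro!: sum_nonneg)

section \<open>The primal problem\<close>

definition upset_decompositions :: "('a::{finite,lattice} \<Rightarrow> real) \<Rightarrow> ('a set \<Rightarrow> real) set" where
  "upset_decompositions \<phi> = {F. (\<forall>V. V \<notin> upsets \<longrightarrow> F V = 0) \<and> (\<forall>V\<in>upsets. 0 \<le> F V)
       \<and> (\<forall>x. (\<Sum>V\<in>{V\<in>upsets. x \<in> V}. F V) = \<phi> x)}"

definition upset_cost :: "('a::{finite,lattice} set \<Rightarrow> real) \<Rightarrow> ('a set \<Rightarrow> real) \<Rightarrow> real" where
  "upset_cost g F = (\<Sum>V\<in>upsets. F V * g V)"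

lemma restrict_upsets_in_upset_decompositions:
  assumes "\<forall>V\<in>upsets. 0 \<le> l V" "\<forall>x. (\<Sum>V\<in>{V\<in>upsets. x \<in> V}. l V) = \<phi> x"
  shows "(\<lambda>V. if V \<in> upsets then l V else 0) \<in> upset_decompositions \<phi>"
proof -
  have "(\<Sum>V\<in>{V\<in>upsets. x \<in> V}. if V \<in> upsets then l V else 0) = \<phi> x" for x
    using assms(2) sum.cong[OF refl, of "{V\<in>upsets. x \<in> V}" "\<lambda>V. if V \<in> upsets then l V else 0" l]
    by simp
  then show ?thesis using assms(1) by (simp add: upset_decompositions_def)
qed

lemma upset_cost_restrict_upsets:
  "upset_cost g (\<lambda>V. if V \<in> upsets then l V else 0) = (\<Sum>V\<in>upsets. l V * g V)"
  by (simp add: upset_cost_def)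

lemma B_values_eq_upset_cost: "B_values \<phi> g = upset_cost g ` upset_decompositions \<phi>"
proof (intro equalityI subsetI)
  fix b assume "b \<in> B_values \<phi> g"
  then obtain \<Phi> where \<Phi>: "\<Phi> \<in> Minf" "Pi_proj \<Phi> = \<phi>" and b: "b = Phi_apply \<Phi> g"
    by (auto simp: B_values_def)
  have "Defs.moebius \<Phi> \<in> upset_decompositions \<phi>"
    using is_moebius_moebius[of \<Phi>] moebius_nonneg[OF \<Phi>(1)] \<Phi>(2)
      Pi_proj_eq_sum_moebius[OF is_moebius_moebius, of \<Phi>]
    by (auto simp: upset_decompositions_def is_moebius_def)
  then show "b \<in> upset_cost g ` upset_decompositions \<phi>"
    using b by (auto simp: upset_cost_def Phi_apply_def)
next
  fix b assume "b \<in> upset_cost g ` upset_decompositions \<phi>"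
  then obtain F where F: "F \<in> upset_decompositions \<phi>" and b: "b = upset_cost g F" by auto
  have F0: "\<forall>V. V \<notin> upsets \<longrightarrow> F V = 0" "\<forall>V\<in>upsets. 0 \<le> F V"
    using F by (auto simp: upset_decompositions_def)
  have "Pi_proj (cumulative F) = \<phi>"
    using Pi_proj_eq_sum_moebius[OF is_moebius_cumulative[OF F0(1)]] F
    by (auto simp: upset_decompositions_def)
  moreover have "Phi_apply (cumulative F) g = b"
    using moebius_eqI[OF is_moebius_cumulative[OF F0(1)]] b
    by (simp add: Phi_apply_def upset_cost_def)
  ultimately show "b \<in> B_values \<phi> g"
    using cumulative_in_Minf[OF F0] unfolding B_values_def by blast
qed

lemma upset_decompositions_add_upset:
  assumes "F \<in> upset_decompositions \<psi>" "U \<in> upsets" "0 \<le> c"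
  shows "F(U := F U + c) \<in> upset_decompositions (\<lambda>x. \<psi> x + (if x \<in> U then c else 0))"
proof -
  have upd: "F(U := F U + c) = (\<lambda>V. F V + (if V = U then c else 0))" by auto
  have "(\<Sum>V\<in>{V\<in>upsets. x \<in> V}. (F(U := F U + c)) V)
          = (\<Sum>V\<in>{V\<in>upsets. x \<in> V}. F V) + (if x \<in> U then c else 0)" for x
    using assms(2) by (simp add: upd sum.distrib)
  then show ?thesis using assms by (auto simp: upset_decompositions_def)
qed

lemma M1_positive_set_in_upsets:
  assumes "\<phi> \<in> M1" "0 < \<phi> x"
  shows "{x. 0 < \<phi> x} \<in> upsets"
  using assms by (force simp: M1_def upsets_def)

lemma M1_subtract_min:
  assumes "\<phi> \<in> M1" and min: "\<forall>x. 0 < \<phi> x \<longrightarrow> \<phi> x0 \<le> \<phi> x"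
  shows "(\<lambda>x. if 0 < \<phi> x then \<phi> x - \<phi> x0 else 0) \<in> M1"
  unfolding M1_def
proof (intro CollectI conjI allI impI)
  fix x
  show "0 \<le> (if 0 < \<phi> x then \<phi> x - \<phi> x0 else 0)" using min by auto
next
  fix x y :: 'a assume "x \<le> y"
  then have "\<phi> x \<le> \<phi> y" using assms(1) by (simp add: M1_def)
  then show "(if 0 < \<phi> x then \<phi> x - \<phi> x0 else 0) \<le> (if 0 < \<phi> y then \<phi> y - \<phi> x0 else 0)"
    using min by auto
qed

(* Peel off the layer \<phi>(x0) 1_V0, where V0 is the support of \<phi> and \<phi>(x0) its least
   positive value; this shrinks the support. *)
lemma upset_decompositions_nonempty:
  assumes "\<phi> \<in> M1"
  shows "upset_decompositions \<phi> \<noteq> {}"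
  using assms
proof (induction "card {x. 0 < \<phi> x}" arbitrary: \<phi> rule: less_induct)
  case less
  have nonneg: "0 \<le> \<phi> x" for x using less.prems by (simp add: M1_def)
  show ?case
  proof (cases "\<exists>x. 0 < \<phi> x")
    case False
    then have "\<phi> x = 0" for x using nonneg[of x] by (meson not_less order.antisym)
    then have "(\<lambda>_. 0) \<in> upset_decompositions \<phi>" by (simp add: upset_decompositions_def)
    then show ?thesis by blast
  next
    case True
    define V0 where "V0 = {x. 0 < \<phi> x}"
    have V0: "V0 \<in> upsets" using M1_positive_set_in_upsets less.prems True by (auto simp: V0_def)
    obtain x0 where x0: "x0 \<in> V0" and min: "\<forall>x\<in>V0. \<phi> x0 \<le> \<phi> x"
      using Min_in[of "\<phi> ` V0"] Min_le[of "\<phi> ` V0"] upsets_nonempty[OF V0] by fastforce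
    define \<psi> where "\<psi> x = (if 0 < \<phi> x then \<phi> x - \<phi> x0 else 0)" for x
    have "\<psi> \<in> M1"
      unfolding \<psi>_def using less.prems min by (intro M1_subtract_min) (auto simp: V0_def)
    moreover have "{x. 0 < \<psi> x} \<subset> V0"
      using x0 by (auto simp: \<psi>_def V0_def split: if_splits)
    then have "card {x. 0 < \<psi> x} < card {x. 0 < \<phi> x}"
      unfolding V0_def by (simp add: psubset_card_mono)
    ultimately obtain F where "F \<in> upset_decompositions \<psi>"
      using less.hyps by blast
    then have "F(V0 := F V0 + \<phi> x0) \<in> upset_decompositions (\<lambda>x. \<psi> x + (if x \<in> V0 then \<phi> x0 else 0))"
      using V0 x0 by (intro upset_decompositions_add_upset) (auto simp: V0_def)
    also have "(\<lambda>x. \<psi> x + (if x \<in> V0 then \<phi> x0 else 0)) = \<phi>"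
    proof
      fix x
      show "\<psi> x + (if x \<in> V0 then \<phi> x0 else 0) = \<phi> x"
        using nonneg[of x] by (auto simp: \<psi>_def V0_def)
    qed
    finally show ?thesis by blast
  qed
qed

section \<open>Linear programming duality\<close>

lemma weak_duality:
  assumes F: "F \<in> upset_decompositions \<phi>" and r: "\<forall>V\<in>upsets. (\<Sum>x\<in>V. r x) \<le> g V"
  shows "(\<Sum>x\<in>UNIV. r x * \<phi> x) \<le> upset_cost g F"
proof -
  have "(\<Sum>x\<in>UNIV. r x * \<phi> x) = (\<Sum>x\<in>UNIV. r x * (\<Sum>V\<in>upsets. if x \<in> V then F V else 0))"
    using F by (simp add: upset_decompositions_def sum.inter_filter[symmetric])
  also have "\<dots> = (\<Sum>x\<in>UNIV. \<Sum>V\<in>upsets. if x \<in> V then r x * F V else 0)"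
    by (simp add: sum_distrib_left if_distrib cong: if_cong)
  also have "\<dots> = (\<Sum>V\<in>upsets. \<Sum>x\<in>UNIV. if x \<in> V then r x * F V else 0)"
    by (rule sum.swap)
  also have "\<dots> = (\<Sum>V\<in>upsets. F V * (\<Sum>x\<in>V. r x))"
    by (simp add: sum.inter_filter[symmetric] sum_distrib_left mult.commute)
  also have "\<dots> \<le> (\<Sum>V\<in>upsets. F V * g V)"
    using F r by (intro sum_mono mult_left_mono) (auto simp: upset_decompositions_def)
  finally show ?thesis by (simp add: upset_cost_def)
qed

lemma S_values_le_upset_cost:
  "F \<in> upset_decompositions \<phi> \<Longrightarrow> s \<in> S_values \<phi> g \<Longrightarrow> s \<le> upset_cost g F"
  by (auto simp: S_values_def intro: weak_duality)

lemma dual_feasible_exists: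
  fixes g :: "'a::{finite,lattice} set \<Rightarrow> real"
  obtains r :: "'a \<Rightarrow> real" where "\<forall>V\<in>upsets. (\<Sum>x\<in>V. r x) \<le> g V"
proof -
  define M where "M = (\<Sum>V\<in>upsets. \<bar>g V\<bar>)"
  have "(\<Sum>x\<in>V. - M) \<le> g V" if V: "V \<in> upsets" for V
  proof -
    have M: "0 \<le> M" unfolding M_def by (simp add: sum_nonneg)
    have "\<bar>g V\<bar> \<le> M" unfolding M_def using V by (intro member_le_sum) auto
    moreover have "1 \<le> card V" using upsets_nonempty[OF V] by (simp add: Suc_le_eq card_gt_0_iff)
    then have "M \<le> real (card V) * M" using M by (simp add: mult_le_cancel_right1)
    ultimately show ?thesis by simp
  qed
  then show thesis by (intro that[of "\<lambda>_. - M"]) blast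
qed

definition indicator_vec :: "'a set \<Rightarrow> real^'a::finite" where
  "indicator_vec V = (\<chi> x. if x \<in> V then 1 else 0)"

definition upset_point :: "('a set \<Rightarrow> real) \<Rightarrow> 'a set \<Rightarrow> (real^'a::finite) \<times> real" where
  "upset_point g V = (indicator_vec V, g V)"

lemma inner_indicator_vec: "inner w (indicator_vec V) = (\<Sum>x\<in>V. w $ x)"
  by (simp add: inner_vec_def indicator_vec_def if_distrib sum.inter_filter[symmetric] cong: if_cong)

lemma sum_upset_points:
  "(\<Sum>V\<in>upsets. l V *\<^sub>R upset_point g V) =
     ((\<chi> x. \<Sum>V\<in>{V\<in>upsets. x \<in> V}. l V), \<Sum>V\<in>upsets. l V * g V)"
  by (rule prod_eqI) (simp_all add: fst_sum snd_sum vec_eq_iff upset_point_def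
      indicator_vec_def if_distrib sum.inter_filter cong: if_cong)

lemma upset_cone_section:
  "((\<chi> x. \<phi> x), t) \<in> convex_cone hull (upset_point g ` upsets)
     \<longleftrightarrow> t \<in> upset_cost g ` upset_decompositions \<phi>"
proof
  assume "((\<chi> x. \<phi> x), t) \<in> convex_cone hull (upset_point g ` upsets)"
  then obtain l where l: "\<forall>V\<in>upsets. 0 \<le> l V"
      and eq: "((\<chi> x. \<phi> x), t) = (\<Sum>V\<in>upsets. l V *\<^sub>R upset_point g V)"
    by (auto simp: convex_cone_hull_finite_image)
  have "\<forall>x. (\<Sum>V\<in>{V\<in>upsets. x \<in> V}. l V) = \<phi> x"
    using eq by (simp add: sum_upset_points vec_eq_iff)
  then have "(\<lambda>V. if V \<in> upsets then l V else 0) \<in> upset_decompositions \<phi>"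
    by (rule restrict_upsets_in_upset_decompositions[OF l])
  moreover have "t = upset_cost g (\<lambda>V. if V \<in> upsets then l V else 0)"
    using eq by (simp add: sum_upset_points upset_cost_restrict_upsets)
  ultimately show "t \<in> upset_cost g ` upset_decompositions \<phi>" by blast
next
  assume "t \<in> upset_cost g ` upset_decompositions \<phi>"
  then obtain F where F: "F \<in> upset_decompositions \<phi>" and t: "t = upset_cost g F" by auto
  then have "((\<chi> x. \<phi> x), t) = (\<Sum>V\<in>upsets. F V *\<^sub>R upset_point g V)"
    by (simp add: sum_upset_points upset_decompositions_def upset_cost_def)
  moreover have "\<forall>V\<in>upsets. 0 \<le> F V" using F by (simp add: upset_decompositions_def)
  ultimately show "((\<chi> x. \<phi> x), t) \<in> convex_cone hull (upset_point g ` upsets)"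
    unfolding convex_cone_hull_finite_image[OF finite] by blast
qed

lemma upset_cost_attains_min:
  assumes "\<phi> \<in> M1"
  obtains F where "F \<in> upset_decompositions \<phi>"
    and "\<forall>G\<in>upset_decompositions \<phi>. upset_cost g F \<le> upset_cost g G"
proof -
  define T where "T = upset_cost g ` upset_decompositions \<phi>"
  have "T = (\<lambda>t. ((\<chi> x. \<phi> x), t)) -` (convex_cone hull (upset_point g ` upsets))"
    by (auto simp: T_def upset_cone_section)
  then have "closed T"
    by (auto intro!: continuous_closed_vimage closed_convex_cone_hull continuous_intros)
  moreover have "T \<noteq> {}" using upset_decompositions_nonempty[OF assms] by (simp add: T_def)
  moreover obtain r where r: "\<forall>V\<in>upsets. (\<Sum>x\<in>V. r x) \<le> g V"
    using dual_feasible_exists by blast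
  have bdd: "bdd_below T"
    unfolding T_def using weak_duality[OF _ r]
    by (auto intro!: bdd_belowI[where m = "\<Sum>x\<in>UNIV. r x * \<phi> x"])
  ultimately have "Inf T \<in> T" by (intro closed_contains_Inf)
  then show thesis using cInf_lower[OF _ bdd] by (auto simp: T_def intro: that)
qed

lemma lower_bound_cone_excludes:
  assumes c: "\<forall>G\<in>upset_decompositions \<phi>. c \<le> upset_cost g G"
  shows "(0, -1) \<notin> convex_cone hull insert (- (\<chi> x. \<phi> x), - c) (upset_point g ` upsets)"
proof
  assume "(0, -1) \<in> convex_cone hull insert (- (\<chi> x. \<phi> x), - c) (upset_point g ` upsets)"
  then obtain \<mu> l where \<mu>: "0 \<le> \<mu>" and l: "\<forall>V\<in>upsets. 0 \<le> l V"
      and eq: "(0, -1) = \<mu> *\<^sub>R (- (\<chi> x. \<phi> x), - c) + (\<Sum>V\<in>upsets. l V *\<^sub>R upset_point g V)"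
    unfolding convex_cone_hull_insert convex_cone_hull_finite_image[OF finite] by blast
  have marg: "(\<Sum>V\<in>{V\<in>upsets. x \<in> V}. l V) = \<mu> * \<phi> x" for x
    using eq by (simp add: sum_upset_points vec_eq_iff)
  have cost: "(\<Sum>V\<in>upsets. l V * g V) = \<mu> * c - 1"
    using eq by (simp add: sum_upset_points)
  show False
  proof (cases "\<mu> = 0")
    case True
    have "l V = 0" if V: "V \<in> upsets" for V
    proof -
      obtain x where "x \<in> V" using upsets_nonempty[OF V] by blast
      then have "l V \<le> (\<Sum>V\<in>{V\<in>upsets. x \<in> V}. l V)"
        using V l by (intro member_le_sum) auto
      then show ?thesis using marg[of x] True l[rule_format, OF V] by simp
    qed
    then show False using cost True by simp
  next
    case False
    \<comment> \<open>rescaled by \<open>1/\<mu>\<close>, the weights \<open>l\<close> decompose \<open>\<phi>\<close> at cost \<open>c - 1/\<mu>\<close>\<close>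
    let ?F = "\<lambda>V. if V \<in> upsets then l V / \<mu> else 0"
    have "\<forall>x. (\<Sum>V\<in>{V\<in>upsets. x \<in> V}. l V / \<mu>) = \<phi> x"
      using marg False by (simp add: sum_divide_distrib[symmetric])
    moreover have "\<forall>V\<in>upsets. 0 \<le> l V / \<mu>" using l \<mu> by simp
    ultimately have "?F \<in> upset_decompositions \<phi>"
      by (intro restrict_upsets_in_upset_decompositions)
    moreover have "upset_cost g ?F = (\<Sum>V\<in>upsets. l V * g V) / \<mu>"
      by (simp add: upset_cost_restrict_upsets sum_divide_distrib)
    ultimately have "c \<le> (\<mu> * c - 1) / \<mu>" using c cost by metis
    then show False using False \<mu> by (simp add: diff_divide_distrib)
  qed
qed

lemma dual_attains_lower_bound:
  assumes "\<forall>G\<in>upset_decompositions \<phi>. c \<le> upset_cost g G"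
  obtains r where "\<forall>V\<in>upsets. (\<Sum>x\<in>V. r x) \<le> g V" "c \<le> (\<Sum>x\<in>UNIV. r x * \<phi> x)"
proof -
  obtain a where sep: "\<forall>v\<in>insert (- (\<chi> x. \<phi> x), - c) (upset_point g ` upsets). 0 \<le> inner a v"
      and neg: "inner a (0, -1) < 0"
    using farkas_convex_cone_hull[OF _ lower_bound_cone_excludes[OF assms]] by auto
  obtain w t where a: "a = (w, t)" by (cases a)
  have t: "0 < t" using neg by (simp add: a)
  \<comment> \<open>the separating functional \<open>(w, t)\<close> normalised by \<open>t\<close> is the dual solution\<close>
  define r where "r x = - (w $ x) / t" for x
  have "(\<Sum>x\<in>V. r x) \<le> g V" if "V \<in> upsets" for V
  proof -
    have "0 \<le> (\<Sum>x\<in>V. w $ x) + t * g V"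
      using sep that by (simp add: a upset_point_def inner_indicator_vec)
    moreover have "(\<Sum>x\<in>V. r x) = - (\<Sum>x\<in>V. w $ x) / t"
      by (simp add: r_def sum_divide_distrib sum_negf)
    ultimately have "t * (\<Sum>x\<in>V. r x) \<le> t * g V"
      using t by (simp add: field_simps)
    then show ?thesis using t by (simp add: mult_le_cancel_left_pos)
  qed
  moreover have "c \<le> (\<Sum>x\<in>UNIV. r x * \<phi> x)"
  proof -
    have "0 \<le> - (\<Sum>x\<in>UNIV. w $ x * \<phi> x) - t * c"
      using sep by (simp add: a inner_vec_def sum_negf)
    moreover have "(\<Sum>x\<in>UNIV. r x * \<phi> x) = - (\<Sum>x\<in>UNIV. w $ x * \<phi> x) / t"
      by (simp add: r_def sum_divide_distrib sum_negf)
    ultimately have "t * c \<le> t * (\<Sum>x\<in>UNIV. r x * \<phi> x)"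
      using t by (simp add: field_simps)
    then show ?thesis using t by (simp add: mult_le_cancel_left_pos)
  qed
  ultimately show thesis by (intro that) auto
qed

theorem theorem3p6:
  fixes \<phi> :: "'a::{finite,lattice} \<Rightarrow> real" and g :: "'a set \<Rightarrow> real"
  assumes "\<phi> \<in> M1"
  shows "\<exists>c. c \<in> B_values \<phi> g \<and> (\<forall>b\<in>B_values \<phi> g. c \<le> b)
            \<and> c \<in> S_values \<phi> g \<and> (\<forall>s\<in>S_values \<phi> g. s \<le> c)"
proof -
  obtain F where F: "F \<in> upset_decompositions \<phi>"
    and min: "\<forall>G\<in>upset_decompositions \<phi>. upset_cost g F \<le> upset_cost g G"
    using upset_cost_attains_min[OF assms] .
  obtain r where r: "\<forall>V\<in>upsets. (\<Sum>x\<in>V. r x) \<le> g V"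
    and le: "upset_cost g F \<le> (\<Sum>x\<in>UNIV. r x * \<phi> x)"
    using dual_attains_lower_bound[OF min] .
  have "upset_cost g F = (\<Sum>x\<in>UNIV. r x * \<phi> x)"
    using weak_duality[OF F r] le by linarith
  then have "upset_cost g F \<in> S_values \<phi> g" using r by (auto simp: S_values_def)
  then show ?thesis
    using F min S_values_le_upset_cost[OF F] unfolding B_values_eq_upset_cost by blast
qed

end
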